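(* Let $x^0, x^1, x^2, \ldots \in \mathbb{R}^m$ be a sequence of vectors and suppose there is a constant $B>0$ with $\|x^n\|_2^2 \le B$ for every $n$. For each $n\ge 1$ let $X^{n-1}\in\mathbb{R}^{n\times m}$ be the matrix whose rows are $(x^0)^T,\ldots,(x^{n-1})^T$. Suppose that for some (large enough) $N'$ the matrix $X^{N'-1}$ satisfies the sparse Riesz condition $\mathrm{SRC}(r,c_*,c^* )$. Let $c>1$ be a constant. Then for every integer $n'$ with $N'<n'\le cN'$, the matrix $X^{n'-1}$ satisfies $\mathrm{SRC}(r, c_*/c, \max(c^*,B))$.
   Context: The coordinate index set $\{1,\ldots,m\}$ is partitioned into nonoverlapping groups $\mathcal{G}_1,\ldots,\mathcal{G}_p$ with $d_j=|\mathcal{G}_j|$. For a set $\mathcal{S}\subset\{1,\ldots,p\}$ of group indices, $X_{*\mathcal{S}}$ denotes the submatrix of $X$ formed by the columns indexed by $\bigcup_{j\in\mathcal{S}}\mathcal{G}_j$. A matrix $X^{n-1}$ with $n$ rows satisfies the sparse Riesz condition $\mathrm{SRC}(r,c_*,c^* )$, where $0<c_*<c^*<\infty$, if for every $\mathcal{S}\subset\{1,\ldots,p\}$ with $|\mathcal{S}|=r$ and every $\nu\in\mathbb{R}^{\sum_{j\in\mathcal{S}}d_j}$, $c_*\|\nu\|_2^2\le \|X^{n-1}_{*\mathcal{S}}\nu\|_2^2/n\le c^*\|\nu\|_2^2$. *)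

theory Defs
  imports Complex_Main
begin

text \<open>Vectors x^i in R^m are represented as functions nat => real, coordinates indexed by {1..m}.
  Groups are G 1, ..., G p (subsets of coordinate indices).\<close>

definition group_partition :: "nat \<Rightarrow> nat \<Rightarrow> (nat \<Rightarrow> nat set) \<Rightarrow> bool" where
  "group_partition m p G \<longleftrightarrow>
     (\<Union>j\<in>{1..p}. G j) = {1..m} \<and>
     (\<forall>j\<in>{1..p}. G j \<noteq> {}) \<and>
     (\<forall>j\<in>{1..p}. \<forall>l\<in>{1..p}. j \<noteq> l \<longrightarrow> G j \<inter> G l = {})"

text \<open>SRC_rows x n G p r cl cu: the n x m matrix X^{n-1} with rows x 0, ..., x (n-1)
  satisfies the sparse Riesz condition SRC(r, cl, cu) with respect to groups G 1..G p.
  A vector nu in R^{sum_{j in S} d_j} is a function on the coordinate set U = union of G j, j in S.\<close>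

definition SRC_rows :: "(nat \<Rightarrow> nat \<Rightarrow> real) \<Rightarrow> nat \<Rightarrow> (nat \<Rightarrow> nat set) \<Rightarrow> nat \<Rightarrow> nat
    \<Rightarrow> real \<Rightarrow> real \<Rightarrow> bool" where
  "SRC_rows x n G p r cl cu \<longleftrightarrow> 0 < cl \<and> cl < cu \<and>
     (\<forall>S. S \<subseteq> {1..p} \<longrightarrow> card S = r \<longrightarrow>
        (\<forall>\<nu> :: nat \<Rightarrow> real.
           cl * (\<Sum>k\<in>(\<Union>j\<in>S. G j). (\<nu> k)\<^sup>2)
             \<le> (\<Sum>i<n. (\<Sum>k\<in>(\<Union>j\<in>S. G j). x i k * \<nu> k)\<^sup>2) / real n \<and>
           (\<Sum>i<n. (\<Sum>k\<in>(\<Union>j\<in>S. G j). x i k * \<nu> k)\<^sup>2) / real n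
             \<le> cu * (\<Sum>k\<in>(\<Union>j\<in>S. G j). (\<nu> k)\<^sup>2)))"

end

theory Submission
  imports Defs "HOL-Analysis.Convex"
begin

text \<open>Adding rows changes the Gram quadratic form only by nonnegative terms, each bounded by
  \<open>B \<parallel>\<nu>\<parallel>\<^sup>2\<close> by Cauchy-Schwarz and the row-norm bound. Hence the average over \<open>n'\<close> rows keeps
  at least the fraction \<open>N'/n' \<ge> 1/c\<close> of the lower bound, and is a convex combination of
  an average bounded by \<open>c\<^sup>*\<close> and terms bounded by \<open>B\<close>.\<close>

lemma group_partition_UN_subset:
  assumes "group_partition m p G" and "S \<subseteq> {1..p}"
  shows "(\<Union>j\<in>S. G j) \<subseteq> {1..m}"
  using assms unfolding group_partition_def by blast

lemma square_sum_prod_le_norm_bound: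
  fixes a b :: "'i \<Rightarrow> real"
  assumes "finite A" and "U \<subseteq> A" and "(\<Sum>k\<in>A. (a k)\<^sup>2) \<le> B"
  shows "(\<Sum>k\<in>U. a k * b k)\<^sup>2 \<le> B * (\<Sum>k\<in>U. (b k)\<^sup>2)"
proof -
  have "(\<Sum>k\<in>U. (a k)\<^sup>2) \<le> (\<Sum>k\<in>A. (a k)\<^sup>2)"
    using assms(1,2) by (intro sum_mono2) auto
  then have "(\<Sum>k\<in>U. (a k)\<^sup>2) * (\<Sum>k\<in>U. (b k)\<^sup>2) \<le> B * (\<Sum>k\<in>U. (b k)\<^sup>2)"
    using assms(3) by (intro mult_right_mono) (auto intro: sum_nonneg)
  with Cauchy_Schwarz_ineq_sum show ?thesis
    by (rule order_trans)
qed

lemma average_lower_bound_extend: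
  fixes f :: "nat \<Rightarrow> real"
  assumes "0 \<le> a" and "0 < N" and "N \<le> n" and "real n \<le> c * real N"
    and "\<And>i. 0 \<le> f i" and "a \<le> (\<Sum>i<N. f i) / real N"
  shows "a / c \<le> (\<Sum>i<n. f i) / real n"
proof -
  have "0 < c * real N"
    using assms(2-4) by linarith
  then have "0 < c"
    using assms(2) by (simp add: zero_less_mult_iff)
  have "a * real n \<le> c * (a * real N)"
    using assms(1,4) by (metis mult.left_commute mult_left_mono)
  then have "a / c * real n \<le> a * real N"
    using \<open>0 < c\<close> by (simp add: field_simps)
  also have "\<dots> \<le> (\<Sum>i<N. f i)"
    using assms(2,6) by (simp add: le_divide_eq)
  also have "\<dots> \<le> (\<Sum>i<n. f i)"
    using assms(3,5) by (intro sum_mono2) auto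
  finally show ?thesis
    using assms(2,3) by (simp add: le_divide_eq)
qed

lemma average_upper_bound_extend:
  fixes f :: "nat \<Rightarrow> real"
  assumes "0 < N" and "N \<le> n" and "\<And>i. f i \<le> M" and "(\<Sum>i<N. f i) / real N \<le> b"
  shows "(\<Sum>i<n. f i) / real n \<le> max b M"
proof -
  have "(\<Sum>i<n. f i) = (\<Sum>i<N. f i) + (\<Sum>i\<in>{N..<n}. f i)"
    using assms(2) by (metis atLeast0LessThan sum.atLeastLessThan_concat zero_le)
  also have "\<dots> \<le> b * real N + M * real (n - N)"
    using assms(1,3,4) sum_bounded_above[of "{N..<n}" f M]
    by (intro add_mono) (auto simp: divide_le_eq mult.commute)
  also have "\<dots> \<le> max b M * real N + max b M * real (n - N)"
    by (intro add_mono mult_right_mono) auto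
  also have "\<dots> = max b M * real n"
    using assms(2) by (simp add: algebra_simps)
  finally show ?thesis
    using assms(1,2) by (simp add: divide_le_eq)
qed

lemma quadratic_form_average_extend:
  fixes x :: "nat \<Rightarrow> 'k \<Rightarrow> real" and \<nu> :: "'k \<Rightarrow> real"
  assumes "0 < N" and "N \<le> n" and "real n \<le> c * real N" and "0 \<le> cl"
    and "\<And>i. (\<Sum>k\<in>U. x i k * \<nu> k)\<^sup>2 \<le> B * (\<Sum>k\<in>U. (\<nu> k)\<^sup>2)"
    and "cl * (\<Sum>k\<in>U. (\<nu> k)\<^sup>2) \<le> (\<Sum>i<N. (\<Sum>k\<in>U. x i k * \<nu> k)\<^sup>2) / real N"
    and "(\<Sum>i<N. (\<Sum>k\<in>U. x i k * \<nu> k)\<^sup>2) / real N \<le> cu * (\<Sum>k\<in>U. (\<nu> k)\<^sup>2)"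
  shows "cl / c * (\<Sum>k\<in>U. (\<nu> k)\<^sup>2) \<le> (\<Sum>i<n. (\<Sum>k\<in>U. x i k * \<nu> k)\<^sup>2) / real n
    \<and> (\<Sum>i<n. (\<Sum>k\<in>U. x i k * \<nu> k)\<^sup>2) / real n \<le> max cu B * (\<Sum>k\<in>U. (\<nu> k)\<^sup>2)"
proof -
  have Q: "0 \<le> (\<Sum>k\<in>U. (\<nu> k)\<^sup>2)"
    by (simp add: sum_nonneg)
  have "cl * (\<Sum>k\<in>U. (\<nu> k)\<^sup>2) / c \<le> (\<Sum>i<n. (\<Sum>k\<in>U. x i k * \<nu> k)\<^sup>2) / real n"
    using assms(1-4) Q by (intro average_lower_bound_extend[OF _ _ _ _ _ assms(6)]) auto
  moreover have "(\<Sum>i<n. (\<Sum>k\<in>U. x i k * \<nu> k)\<^sup>2) / real n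
      \<le> max (cu * (\<Sum>k\<in>U. (\<nu> k)\<^sup>2)) (B * (\<Sum>k\<in>U. (\<nu> k)\<^sup>2))"
    using assms(1,2,5,7) by (rule average_upper_bound_extend)
  ultimately show ?thesis
    using Q by (simp add: max_mult_distrib_right)
qed

theorem proposition2:
  fixes x :: "nat \<Rightarrow> nat \<Rightarrow> real" and m p r N' :: nat and G :: "nat \<Rightarrow> nat set"
    and B cl cu c :: real
  assumes "group_partition m p G"
    and "B > 0"
    and "\<And>n. (\<Sum>k=1..m. (x n k)\<^sup>2) \<le> B"
    and "N' \<ge> 1"
    and "SRC_rows x N' G p r cl cu"
    and "c > 1"
  shows "\<forall>n'::nat. N' < n' \<and> real n' \<le> c * real N' \<longrightarrow>
           SRC_rows x n' G p r (cl / c) (max cu B)"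
proof (intro allI impI)
  fix n' :: nat
  assume n': "N' < n' \<and> real n' \<le> c * real N'"
  have cl: "0 < cl" "cl < cu"
    using assms(5) unfolding SRC_rows_def by auto
  show "SRC_rows x n' G p r (cl / c) (max cu B)"
    unfolding SRC_rows_def
  proof (intro conjI allI impI)
    show "0 < cl / c"
      using cl assms(6) by simp
    have "cl / c < cl"
      using cl assms(6) by (simp add: divide_less_eq)
    with cl show "cl / c < max cu B"
      by linarith
    fix S :: "nat set" and \<nu> :: "nat \<Rightarrow> real"
    assume S: "S \<subseteq> {1..p}" "card S = r"
    have row_bound: "(\<Sum>k\<in>(\<Union>j\<in>S. G j). x i k * \<nu> k)\<^sup>2 \<le> B * (\<Sum>k\<in>(\<Union>j\<in>S. G j). (\<nu> k)\<^sup>2)"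
      for i
      using group_partition_UN_subset[OF assms(1) S(1)] assms(3)
      by (intro square_sum_prod_le_norm_bound[of "{1..m}"]) auto
    note src = assms(5)[unfolded SRC_rows_def, THEN conjunct2, THEN conjunct2, rule_format, OF S, of \<nu>]
    have "0 < N'" "N' \<le> n'" "real n' \<le> c * real N'" "0 \<le> cl"
      using assms(4) n' cl by auto
    note extended = quadratic_form_average_extend[OF this row_bound src[THEN conjunct1] src[THEN conjunct2]]
    show "cl / c * (\<Sum>k\<in>(\<Union>j\<in>S. G j). (\<nu> k)\<^sup>2)
        \<le> (\<Sum>i<n'. (\<Sum>k\<in>(\<Union>j\<in>S. G j). x i k * \<nu> k)\<^sup>2) / real n'"
      using extended by (rule conjunct1)
    show "(\<Sum>i<n'. (\<Sum>k\<in>(\<Union>j\<in>S. G j). x i k * \<nu> k)\<^sup>2) / real n'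
        \<le> max cu B * (\<Sum>k\<in>(\<Union>j\<in>S. G j). (\<nu> k)\<^sup>2)"
      using extended by (rule conjunct2)
  qed
qed

end
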